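(* Let $f:\mathbb{R}^n\to\mathbb{R}$ be continuously differentiable and bounded below, let $x,d\in\mathbb{R}^n$ with $\langle g,d\rangle<0$ where $g=\nabla f(x)$, and let $0<2\rho<\sigma<1$, $\eta=\frac{\sigma}{2(\sigma-\rho)}$. Say that $\alpha>0$ satisfies (W1) if $f(x+\alpha d)\le f(x)+\rho\alpha\langle g,d\rangle$, and satisfies (W2) if $\langle\nabla f(x+\alpha d),d\rangle\ge\sigma\langle g,d\rangle$. Set $\alpha_0'=0$ and let $\alpha_0''>0$ be any number at which (W1) fails (such a number exists). For $\ell=0,1,2,\dots$, with $x_\ell'=x+\alpha_\ell' d$, $x_\ell''=x+\alpha_\ell'' d$, define $$c_\ell=\alpha_\ell'+\frac{\alpha_\ell''-\alpha_\ell'}{2}\cdot\frac{-(\alpha_\ell''-\alpha_\ell')\langle\nabla f(x_\ell'),d\rangle}{f(x_\ell'')-f(x_\ell')-(\alpha_\ell''-\alpha_\ell')\langle\nabla f(x_\ell'),d\rangle},\qquad \tilde c_\ell=\max\{c_\ell,\ \eta\alpha_\ell'+(1-\eta)\alpha_\ell''\}.$$ If $\tilde c_\ell$ satisfies both (W1) and (W2), stop and output $\alpha=\tilde c_\ell$. Otherwise set $[\alpha_{\ell+1}',\alpha_{\ell+1}'']=[\alpha_\ell',\tilde c_\ell]$ if $\tilde c_\ell$ does not satisfy (W1), and $[\alpha_{\ell+1}',\alpha_{\ell+1}'']=[\tilde c_\ell,\alpha_\ell'']$ otherwise. Then this procedure is well defined and stops after finitely many iterations, i.e. there is a finite $\ell^*$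 such that $\alpha=\tilde c_{\ell^*}$ satisfies (W1) and (W2).
   Context: $\langle\cdot,\cdot\rangle$ is the Euclidean inner product on $\mathbb{R}^n$. (W1)–(W2) are the standard (weak) Wolfe–Powell conditions for the step $\alpha$ along $d$ at $x$. *)

theory Defs
  imports "HOL-Analysis.Analysis"
begin

definition W1 :: "('a::euclidean_space \<Rightarrow> real) \<Rightarrow> ('a \<Rightarrow> 'a) \<Rightarrow> 'a \<Rightarrow> 'a \<Rightarrow> real \<Rightarrow> real \<Rightarrow> bool" where
  "W1 f f' x d \<rho> \<alpha> \<longleftrightarrow> \<alpha> > 0 \<and> f (x + \<alpha> *\<^sub>R d) \<le> f x + \<rho> * \<alpha> * (f' x \<bullet> d)"

definition W2 :: "('a::euclidean_space \<Rightarrow> real) \<Rightarrow> ('a \<Rightarrow> 'a) \<Rightarrow> 'a \<Rightarrow> 'a \<Rightarrow> real \<Rightarrow> real \<Rightarrow> bool" where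
  "W2 f f' x d \<sigma> \<alpha> \<longleftrightarrow> \<alpha> > 0 \<and> f' (x + \<alpha> *\<^sub>R d) \<bullet> d \<ge> \<sigma> * (f' x \<bullet> d)"

definition ls_den :: "('a::euclidean_space \<Rightarrow> real) \<Rightarrow> ('a \<Rightarrow> 'a) \<Rightarrow> 'a \<Rightarrow> 'a \<Rightarrow> real \<Rightarrow> real \<Rightarrow> real" where
  "ls_den f f' x d a1 a2 =
     f (x + a2 *\<^sub>R d) - f (x + a1 *\<^sub>R d) - (a2 - a1) * (f' (x + a1 *\<^sub>R d) \<bullet> d)"

definition ls_c :: "('a::euclidean_space \<Rightarrow> real) \<Rightarrow> ('a \<Rightarrow> 'a) \<Rightarrow> 'a \<Rightarrow> 'a \<Rightarrow> real \<Rightarrow> real \<Rightarrow> real" where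
  "ls_c f f' x d a1 a2 =
     a1 + (a2 - a1) / 2 * ((- (a2 - a1) * (f' (x + a1 *\<^sub>R d) \<bullet> d)) / ls_den f f' x d a1 a2)"

definition ls_ct :: "('a::euclidean_space \<Rightarrow> real) \<Rightarrow> ('a \<Rightarrow> 'a) \<Rightarrow> 'a \<Rightarrow> 'a \<Rightarrow> real \<Rightarrow> real \<Rightarrow> real \<Rightarrow> real" where
  "ls_ct f f' x d \<eta> a1 a2 = max (ls_c f f' x d a1 a2) (\<eta> * a1 + (1 - \<eta>) * a2)"

text \<open>One bracket update (used while the stopping test fails).\<close>
definition ls_step :: "('a::euclidean_space \<Rightarrow> real) \<Rightarrow> ('a \<Rightarrow> 'a) \<Rightarrow> 'a \<Rightarrow> 'a \<Rightarrow> real \<Rightarrow> real \<Rightarrow> real \<times> real \<Rightarrow> real \<times> real" where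
  "ls_step f f' x d \<rho> \<eta> p =
     (let a1 = fst p; a2 = snd p; ct = ls_ct f f' x d \<eta> a1 a2 in
      if \<not> W1 f f' x d \<rho> ct then (a1, ct) else (ct, a2))"

definition ls_bracket :: "('a::euclidean_space \<Rightarrow> real) \<Rightarrow> ('a \<Rightarrow> 'a) \<Rightarrow> 'a \<Rightarrow> 'a \<Rightarrow> real \<Rightarrow> real \<Rightarrow> real \<Rightarrow> nat \<Rightarrow> real \<times> real" where
  "ls_bracket f f' x d \<rho> \<eta> a0 l = (ls_step f f' x d \<rho> \<eta> ^^ l) (0, a0)"

end

theory Submission
  imports Defs
begin

text \<open>
  Along the ray, the Wolfe search keeps a bracket [a1, a2] where a1 satisfies (W1) but not (W2)
  (so the slope there is below \<sigma> g, g = \<langle>\<nabla>f(x), d\<rangle> < 0) and a2 violates (W1). Then the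
  denominator of c is positive and the safeguarded trial point lies strictly inside the bracket,
  cutting its width by the factor \<eta> < 1. By the mean value theorem every bracket contains a point
  with slope above \<rho> g, so two slopes at distance at most the width differ by more than
  (\<sigma> - \<rho>) |g|. Uniform continuity of the slope on [0, a0] therefore bounds the width from
  below, and the search must accept after finitely many steps.
\<close>

lemma has_real_derivative_along_ray:
  fixes f :: "'a::euclidean_space \<Rightarrow> real"
  assumes "\<And>y. (f has_derivative (\<lambda>h. f' y \<bullet> h)) (at y)"
  shows "((\<lambda>t. f (x + t *\<^sub>R d)) has_real_derivative (f' (x + t *\<^sub>R d) \<bullet> d)) (at t)"
proof -
  have "((\<lambda>t. x + t *\<^sub>R d) has_derivative (\<lambda>s. s *\<^sub>R d)) (at t)"
    by (auto intro!: derivative_eq_intros)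
  from diff_chain_at[OF this assms[of "x + t *\<^sub>R d"]]
  have "((\<lambda>t. f (x + t *\<^sub>R d)) has_derivative (\<lambda>s. f' (x + t *\<^sub>R d) \<bullet> (s *\<^sub>R d))) (at t)"
    by (simp add: o_def)
  then show ?thesis
    unfolding has_field_derivative_def by (rule has_derivative_eq_rhs) (auto simp: fun_eq_iff)
qed

lemma bounded_below_violates_sufficient_decrease:
  fixes f :: "'a::euclidean_space \<Rightarrow> real"
  assumes "bdd_below (range f)" "f' x \<bullet> d < 0" "0 < \<rho>"
  shows "\<exists>a. a > 0 \<and> \<not> W1 f f' x d \<rho> a"
proof -
  obtain B where B: "\<And>y. B \<le> f y" using assms(1) unfolding bdd_below_def by auto
  define c where "c = \<rho> * - (f' x \<bullet> d)"
  have c: "0 < c" using assms(2,3) unfolding c_def by (simp add: mult_pos_neg)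
  define a where "a = max 1 ((f x - B + 1) / c)"
  have "(f x - B + 1) / c \<le> a" unfolding a_def by simp
  then have "f x - B + 1 \<le> a * c" using c by (simp add: pos_divide_le_eq)
  then have "f x + \<rho> * a * (f' x \<bullet> d) < f (x + a *\<^sub>R d)"
    using B[of "x + a *\<^sub>R d"] unfolding c_def by (simp add: algebra_simps)
  moreover have "a > 0" unfolding a_def by simp
  ultimately show ?thesis unfolding W1_def by auto
qed

text \<open>
  The offset c - a1 in terms of h = a2 - a1, p = the slope at a1, D = f(a2) - f(a1) and g:
  the two hypotheses on D and p are exactly what the bracket invariant provides.
\<close>
lemma interpolation_offset_bounds:
  fixes g p h D \<rho> \<sigma> :: real
  assumes "g < 0" "0 < h" "0 < \<rho>" "\<rho> < \<sigma>" "\<rho> * h * g < D" "p < \<sigma> * g"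
  shows "0 < D - h * p"
    and "0 < h / 2 * (- h * p / (D - h * p))"
    and "h / 2 * (- h * p / (D - h * p)) \<le> \<sigma> / (2 * (\<sigma> - \<rho>)) * h"
proof -
  have hp: "h * p < h * (\<sigma> * g)" using assms by simp
  have "h * (\<sigma> * g) < h * (\<rho> * g)"
    using assms by (intro mult_strict_left_mono) (auto simp: mult_less_cancel_right)
  then show den: "0 < D - h * p" using hp assms(5) mult.left_commute[of \<rho> h g] by linarith
  have "- h * p > 0" using hp assms by (smt (verit) mult_pos_neg mult_neg_neg)
  then have "0 < - h * p / (D - h * p)" using den by (rule divide_pos_pos)
  then show "0 < h / 2 * (- h * p / (D - h * p))"
    by (rule mult_pos_pos[rotated]) (use assms(2) in simp)
  have "h * p * \<rho> < h * (\<sigma> * g) * \<rho>" "\<sigma> * (\<rho> * h * g) < \<sigma> * D" using hp assms by simp_all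
  then have "- h * p * (\<sigma> - \<rho>) \<le> \<sigma> * (D - h * p)" by (simp add: algebra_simps)
  then have "- h * p / (D - h * p) \<le> \<sigma> / (\<sigma> - \<rho>)" using den assms by (simp add: field_simps)
  then have "h / 2 * (- h * p / (D - h * p)) \<le> h / 2 * (\<sigma> / (\<sigma> - \<rho>))"
    using assms by (intro mult_left_mono) auto
  then show "h / 2 * (- h * p / (D - h * p)) \<le> \<sigma> / (2 * (\<sigma> - \<rho>)) * h"
    by (simp add: mult.commute)
qed

locale wolfe_line_search =
  fixes f :: "'a::euclidean_space \<Rightarrow> real" and f' :: "'a \<Rightarrow> 'a"
    and x d :: 'a and \<rho> \<sigma> \<eta> :: real
  assumes grad: "\<And>y. (f has_derivative (\<lambda>h. f' y \<bullet> h)) (at y)"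
    and cont: "continuous_on UNIV f'"
    and descent: "f' x \<bullet> d < 0"
    and rho_pos: "0 < \<rho>" and rho_less: "2 * \<rho> < \<sigma>" and sigma_less: "\<sigma> < 1"
    and eta_eq: "\<eta> = \<sigma> / (2 * (\<sigma> - \<rho>))"
begin

abbreviation slope :: "real \<Rightarrow> real" where
  "slope t \<equiv> f' (x + t *\<^sub>R d) \<bullet> d"

abbreviation bracket :: "real \<Rightarrow> nat \<Rightarrow> real \<times> real" where
  "bracket a0 l \<equiv> ls_bracket f f' x d \<rho> \<eta> a0 l"

definition wolfe_bracket :: "real \<Rightarrow> real \<Rightarrow> bool" where
  "wolfe_bracket a1 a2 \<longleftrightarrow> 0 \<le> a1 \<and> a1 < a2 \<and>
     f (x + a1 *\<^sub>R d) \<le> f x + \<rho> * a1 * (f' x \<bullet> d) \<and> slope a1 < \<sigma> * (f' x \<bullet> d) \<and>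
     f (x + a2 *\<^sub>R d) > f x + \<rho> * a2 * (f' x \<bullet> d)"

definition accepts :: "real \<times> real \<Rightarrow> bool" where
  "accepts p \<longleftrightarrow> (let ct = ls_ct f f' x d \<eta> (fst p) (snd p)
                   in W1 f f' x d \<rho> ct \<and> W2 f f' x d \<sigma> ct)"

lemma eta_bounds: "1 / 2 < \<eta>" "\<eta> < 1"
  using rho_pos rho_less unfolding eta_eq by (simp_all add: field_simps)

lemma wolfe_bracket_initial:
  assumes "0 < a0" "\<not> W1 f f' x d \<rho> a0"
  shows "wolfe_bracket 0 a0"
  using assms descent sigma_less unfolding wolfe_bracket_def W1_def by auto

lemma wolfe_bracket_increase:
  assumes "wolfe_bracket a1 a2"
  shows "\<rho> * (a2 - a1) * (f' x \<bullet> d) < f (x + a2 *\<^sub>R d) - f (x + a1 *\<^sub>R d)"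
  using assms unfolding wolfe_bracket_def by (simp add: algebra_simps)

lemma wolfe_bracket_interpolation_bounds:
  assumes "wolfe_bracket a1 a2"
  shows "0 < ls_den f f' x d a1 a2" "a1 < ls_c f f' x d a1 a2"
    "ls_c f f' x d a1 a2 \<le> a1 + \<eta> * (a2 - a1)"
proof -
  have h: "0 < a2 - a1" and p: "slope a1 < \<sigma> * (f' x \<bullet> d)"
    using assms unfolding wolfe_bracket_def by auto
  have "\<rho> < \<sigma>" using rho_pos rho_less by simp
  note bounds =
    interpolation_offset_bounds[OF descent h rho_pos this wolfe_bracket_increase[OF assms] p]
  show "0 < ls_den f f' x d a1 a2" using bounds(1) unfolding ls_den_def by simp
  show "a1 < ls_c f f' x d a1 a2" using bounds(2) unfolding ls_c_def ls_den_def by simp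
  show "ls_c f f' x d a1 a2 \<le> a1 + \<eta> * (a2 - a1)"
    using bounds(3) unfolding ls_c_def ls_den_def eta_eq by simp
qed

text \<open>
  The safeguard puts ct at least (1 - \<eta>)(a2 - a1) beyond a1, and the bound on c keeps it within
  \<eta>(a2 - a1) of a1; both fit inside the bracket because 1 - \<eta> < 1/2 < \<eta> < 1.
\<close>
lemma wolfe_bracket_ls_ct_bounds:
  assumes "wolfe_bracket a1 a2"
  defines "ct \<equiv> ls_ct f f' x d \<eta> a1 a2"
  shows "a1 < ct" "ct < a2" "ct - a1 \<le> \<eta> * (a2 - a1)" "a2 - ct \<le> \<eta> * (a2 - a1)"
proof -
  have h: "0 < a2 - a1" using assms unfolding wolfe_bracket_def by simp
  have ct: "ct = max (ls_c f f' x d a1 a2) (a1 + (1 - \<eta>) * (a2 - a1))"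
    unfolding ct_def ls_ct_def by (simp add: algebra_simps)
  have "(1 - \<eta>) * (a2 - a1) \<le> \<eta> * (a2 - a1)" "\<eta> * (a2 - a1) < a2 - a1"
    "0 < (1 - \<eta>) * (a2 - a1)"
    using eta_bounds h by (simp_all add: mult_right_mono)
  then show "a1 < ct" "ct < a2" "ct - a1 \<le> \<eta> * (a2 - a1)" "a2 - ct \<le> \<eta> * (a2 - a1)"
    using wolfe_bracket_interpolation_bounds(2,3)[OF assms(1)] unfolding ct
    by (auto simp: algebra_simps)
qed

lemma ls_step_wolfe_bracket:
  assumes "wolfe_bracket a1 a2" "\<not> accepts (a1, a2)"
  defines "p \<equiv> ls_step f f' x d \<rho> \<eta> (a1, a2)"
  shows "wolfe_bracket (fst p) (snd p)" "snd p \<le> a2" "snd p - fst p \<le> \<eta> * (a2 - a1)"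
proof -
  define ct where "ct = ls_ct f f' x d \<eta> a1 a2"
  note ct_bounds = wolfe_bracket_ls_ct_bounds[OF assms(1), folded ct_def]
  have ct_pos: "0 < ct" using ct_bounds(1) assms(1) unfolding wolfe_bracket_def by simp
  have "wolfe_bracket (fst p) (snd p) \<and> snd p \<le> a2 \<and> snd p - fst p \<le> \<eta> * (a2 - a1)"
  proof (cases "W1 f f' x d \<rho> ct")
    case False
    then have "p = (a1, ct)" unfolding p_def ls_step_def ct_def by simp
    then show ?thesis using False ct_pos ct_bounds assms(1) unfolding wolfe_bracket_def W1_def by auto
  next
    case True
    then have "\<not> W2 f f' x d \<sigma> ct" using assms(2) unfolding accepts_def ct_def by simp
    moreover have "p = (ct, a2)" using True unfolding p_def ls_step_def ct_def by simp
    ultimately show ?thesis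
      using True ct_pos ct_bounds assms(1) unfolding wolfe_bracket_def W1_def W2_def by auto
  qed
  then show "wolfe_bracket (fst p) (snd p)" "snd p \<le> a2" "snd p - fst p \<le> \<eta> * (a2 - a1)"
    by auto
qed

lemma bracket_invariant:
  assumes "0 < a0" "\<not> W1 f f' x d \<rho> a0" "\<forall>k<l. \<not> accepts (bracket a0 k)"
  shows "wolfe_bracket (fst (bracket a0 l)) (snd (bracket a0 l)) \<and> snd (bracket a0 l) \<le> a0
    \<and> snd (bracket a0 l) - fst (bracket a0 l) \<le> \<eta> ^ l * a0"
  using assms(3)
proof (induction l)
  case 0
  then show ?case using wolfe_bracket_initial[OF assms(1,2)] by (simp add: ls_bracket_def)
next
  case (Suc l)
  let ?p = "bracket a0 l"
  have IH: "wolfe_bracket (fst ?p) (snd ?p)" "snd ?p \<le> a0" "snd ?p - fst ?p \<le> \<eta> ^ l * a0"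
    using Suc.IH Suc.prems by simp_all
  have next_eq: "bracket a0 (Suc l) = ls_step f f' x d \<rho> \<eta> (fst ?p, snd ?p)"
    by (simp add: ls_bracket_def)
  have "\<not> accepts (fst ?p, snd ?p)" using Suc.prems by simp
  note step = ls_step_wolfe_bracket[OF IH(1) this, folded next_eq]
  have "\<eta> * (snd ?p - fst ?p) \<le> \<eta> * (\<eta> ^ l * a0)"
    using IH(3) eta_bounds by (intro mult_left_mono) auto
  then have "snd (bracket a0 (Suc l)) - fst (bracket a0 (Suc l)) \<le> \<eta> ^ Suc l * a0"
    using step(3) by (simp add: mult.assoc)
  then show ?case using step(1) order_trans[OF step(2) IH(2)] by blast
qed

lemma wolfe_bracket_slope_exceeds:
  assumes "wolfe_bracket a1 a2"
  obtains \<xi> where "a1 < \<xi>" "\<xi> < a2" "\<rho> * (f' x \<bullet> d) < slope \<xi>"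
proof -
  have h: "a1 < a2" using assms unfolding wolfe_bracket_def by simp
  obtain \<xi> where \<xi>: "a1 < \<xi>" "\<xi> < a2"
      "f (x + a2 *\<^sub>R d) - f (x + a1 *\<^sub>R d) = (a2 - a1) * slope \<xi>"
    using MVT2[OF h, of "\<lambda>t. f (x + t *\<^sub>R d)" slope] has_real_derivative_along_ray[OF grad]
    by blast
  then have "(a2 - a1) * (\<rho> * (f' x \<bullet> d)) < (a2 - a1) * slope \<xi>"
    using wolfe_bracket_increase[OF assms] by (simp add: algebra_simps)
  then show ?thesis using that \<xi> h by simp
qed

lemma wolfe_bracket_width_bounded_below:
  obtains \<delta> where "0 < \<delta>" "\<And>a1 a2. wolfe_bracket a1 a2 \<Longrightarrow> a2 \<le> a0 \<Longrightarrow> \<delta> \<le> a2 - a1"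
proof -
  have "continuous_on UNIV slope"
    by (intro continuous_intros continuous_on_compose2[OF cont]) auto
  then have "uniformly_continuous_on {0..a0} slope"
    by (intro compact_uniformly_continuous) (auto intro: continuous_on_subset)
  moreover have "0 < (\<sigma> - \<rho>) * - (f' x \<bullet> d)"
    using rho_pos rho_less descent by (simp add: mult_pos_neg)
  ultimately obtain \<delta> where \<delta>: "0 < \<delta>" and close:
      "\<And>s t. s \<in> {0..a0} \<Longrightarrow> t \<in> {0..a0} \<Longrightarrow> dist s t < \<delta> \<Longrightarrow>
         dist (slope s) (slope t) < (\<sigma> - \<rho>) * - (f' x \<bullet> d)"
    unfolding uniformly_continuous_on_def by metis
  have "\<delta> \<le> a2 - a1" if br: "wolfe_bracket a1 a2" and "a2 \<le> a0" for a1 a2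
  proof (rule ccontr)
    assume "\<not> \<delta> \<le> a2 - a1"
    obtain \<xi> where \<xi>: "a1 < \<xi>" "\<xi> < a2" "\<rho> * (f' x \<bullet> d) < slope \<xi>"
      using wolfe_bracket_slope_exceeds[OF br] .
    have a1: "0 \<le> a1" "slope a1 < \<sigma> * (f' x \<bullet> d)" using br unfolding wolfe_bracket_def by auto
    have "dist (slope \<xi>) (slope a1) < (\<sigma> - \<rho>) * - (f' x \<bullet> d)"
      using close[of \<xi> a1] \<xi> a1 \<open>a2 \<le> a0\<close> \<open>\<not> \<delta> \<le> a2 - a1\<close> by (simp add: dist_real_def)
    then show False using \<xi>(3) a1(2) by (simp add: dist_real_def algebra_simps)
  qed
  then show ?thesis using that \<delta> by blast
qed

lemma bracket_eventually_accepts: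
  assumes "0 < a0" "\<not> W1 f f' x d \<rho> a0"
  shows "\<exists>l. accepts (bracket a0 l)"
proof (rule ccontr)
  assume never: "\<nexists>l. accepts (bracket a0 l)"
  obtain \<delta> where \<delta>: "0 < \<delta>" "\<And>a1 a2. wolfe_bracket a1 a2 \<Longrightarrow> a2 \<le> a0 \<Longrightarrow> \<delta> \<le> a2 - a1"
    using wolfe_bracket_width_bounded_below by blast
  obtain l where "\<eta> ^ l < \<delta> / a0"
    using real_arch_pow_inv[of "\<delta> / a0" \<eta>] \<delta>(1) assms(1) eta_bounds by auto
  then have "\<eta> ^ l * a0 < \<delta>" using assms(1) by (simp add: pos_less_divide_eq)
  then show False using bracket_invariant[OF assms, of l] never \<delta>(2) by fastforce
qed

end

theorem lemma2:
  fixes f :: "'a::euclidean_space \<Rightarrow> real" and f' :: "'a \<Rightarrow> 'a"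
    and x d :: 'a and \<rho> \<sigma> \<eta> :: real
  assumes grad: "\<And>y. (f has_derivative (\<lambda>h. f' y \<bullet> h)) (at y)"
    and cont: "continuous_on UNIV f'"
    and bdd: "bdd_below (range f)"
    and descent: "f' x \<bullet> d < 0"
    and rho: "0 < 2 * \<rho>" "2 * \<rho> < \<sigma>" "\<sigma> < 1"
    and eta: "\<eta> = \<sigma> / (2 * (\<sigma> - \<rho>))"
  shows "(\<exists>a0. a0 > 0 \<and> \<not> W1 f f' x d \<rho> a0) \<and>
    (\<forall>a0. a0 > 0 \<and> \<not> W1 f f' x d \<rho> a0 \<longrightarrow>
       (\<exists>L. (\<forall>l\<le>L. ls_den f f' x d (fst (ls_bracket f f' x d \<rho> \<eta> a0 l))
                                      (snd (ls_bracket f f' x d \<rho> \<eta> a0 l)) \<noteq> 0)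
          \<and> (let p = ls_bracket f f' x d \<rho> \<eta> a0 L;
                 ct = ls_ct f f' x d \<eta> (fst p) (snd p)
             in W1 f f' x d \<rho> ct \<and> W2 f f' x d \<sigma> ct)))"
proof (intro conjI allI impI)
  interpret wolfe_line_search f f' x d \<rho> \<sigma> \<eta>
    using assms by unfold_locales auto
  show "\<exists>a0. a0 > 0 \<and> \<not> W1 f f' x d \<rho> a0"
    using bdd descent rho_pos by (rule bounded_below_violates_sufficient_decrease)
  fix a0 assume a0: "a0 > 0 \<and> \<not> W1 f f' x d \<rho> a0"
  define L where "L = (LEAST l. accepts (bracket a0 l))"
  have "\<exists>l. accepts (bracket a0 l)" using a0 by (intro bracket_eventually_accepts) simp_all
  then have "accepts (bracket a0 L)" unfolding L_def by (rule LeastI_ex)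
  moreover have "ls_den f f' x d (fst (bracket a0 l)) (snd (bracket a0 l)) \<noteq> 0" if "l \<le> L" for l
  proof -
    have "\<not> accepts (bracket a0 k)" if "k < l" for k
      using not_less_Least[of k "\<lambda>l. accepts (bracket a0 l)"] \<open>k < l\<close> \<open>l \<le> L\<close>
      unfolding L_def by linarith
    then have "wolfe_bracket (fst (bracket a0 l)) (snd (bracket a0 l))"
      using bracket_invariant[of a0 l] a0 by blast
    from wolfe_bracket_interpolation_bounds(1)[OF this] show ?thesis by linarith
  qed
  ultimately show "\<exists>L. (\<forall>l\<le>L. ls_den f f' x d (fst (bracket a0 l)) (snd (bracket a0 l)) \<noteq> 0)
      \<and> (let p = bracket a0 L; ct = ls_ct f f' x d \<eta> (fst p) (snd p)
         in W1 f f' x d \<rho> ct \<and> W2 f f' x d \<sigma> ct)"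
    by (intro exI[of _ L] conjI allI impI) (simp_all add: accepts_def Let_def)
qed

end
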